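(* Let $(X,d)$ be a compact metric space, $f_{1,\infty}=(f_n)_{n=1}^\infty$ a sequence of continuous maps $f_n:X\to X$, and $(p_k)_{k=1}^\infty$ a sequence of positive integers. Let $(A_i)_{i=0}^\infty$ and $(B_i)_{i=0}^\infty$ be decreasing sequences of compact subsets of $X$ with $\bigcap_{i=0}^\infty A_i=\{a\}$ and $\bigcap_{i=0}^\infty B_i=\{b\}$, where $a\neq b$. Suppose that for every choice $c=(C_k)_k$ with $C_k\in\{A_k,B_k\}$ for each $k$, there exists $x_c\in X$ such that $f_1^{p_k}(x_c)\in C_k$ for all $k\ge 1$. Then $f_{1,\infty}$ is uniformly distributively chaotic in the sequence $(p_k)$.
   Context: For $n\in\mathbb{N}$, $f_1^n=f_n\circ\cdots\circ f_1$. For $x,y\in X$ and $t>0$ let $\Phi(f_{1,\infty},x,y,t,p_k)=\liminf_{n\to\infty}\frac1n\#\{1\le i\le n: d(f_1^{p_i}(x),f_1^{p_i}(y))<t\}$ and $\Phi^*(f_{1,\infty},x,y,t,p_k)=\limsup_{n\to\infty}\frac1n\#\{1\le i\le n: d(f_1^{p_i}(x),f_1^{p_i}(y))<t\}$. The system is uniformly distributively chaotic in the sequence $(p_k)$ if there exist an uncountable $S\subseteq X$ and $\varepsilon>0$ such that for all distinct $x,y\in S$: $\Phi(f_{1,\infty},x,y,\varepsilon,p_k)=0$ and $\Phi^*(f_{1,\infty},x,y,t,p_k)=1$ for all $t>0$. *)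

theory Defs
  imports "HOL-Analysis.Analysis"
begin

text \<open>Composition f_1^n = f_n o ... o f_1 (f_1^0 = id); maps are indexed from 1.\<close>
primrec comp_seq :: "(nat \<Rightarrow> 'a \<Rightarrow> 'a) \<Rightarrow> nat \<Rightarrow> 'a \<Rightarrow> 'a" where
  "comp_seq f 0 = id"
| "comp_seq f (Suc n) = f (Suc n) \<circ> comp_seq f n"

definition freq :: "(nat \<Rightarrow> 'a::metric_space \<Rightarrow> 'a) \<Rightarrow> 'a \<Rightarrow> 'a \<Rightarrow> real \<Rightarrow> (nat \<Rightarrow> nat) \<Rightarrow> nat \<Rightarrow> real" where
  "freq f x y t p n =
     real (card {i \<in> {1..n}. dist (comp_seq f (p i) x) (comp_seq f (p i) y) < t}) / real n"

definition Phi_lower :: "(nat \<Rightarrow> 'a::metric_space \<Rightarrow> 'a) \<Rightarrow> 'a \<Rightarrow> 'a \<Rightarrow> real \<Rightarrow> (nat \<Rightarrow> nat) \<Rightarrow> ereal" where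
  "Phi_lower f x y t p = liminf (\<lambda>n. ereal (freq f x y t p n))"

definition Phi_upper :: "(nat \<Rightarrow> 'a::metric_space \<Rightarrow> 'a) \<Rightarrow> 'a \<Rightarrow> 'a \<Rightarrow> real \<Rightarrow> (nat \<Rightarrow> nat) \<Rightarrow> ereal" where
  "Phi_upper f x y t p = limsup (\<lambda>n. ereal (freq f x y t p n))"

definition unif_distr_chaotic :: "'a::metric_space set \<Rightarrow> (nat \<Rightarrow> 'a \<Rightarrow> 'a) \<Rightarrow> (nat \<Rightarrow> nat) \<Rightarrow> bool" where
  "unif_distr_chaotic X f p \<longleftrightarrow>
     (\<exists>S \<subseteq> X. uncountable S \<and> (\<exists>\<epsilon>>0. \<forall>x\<in>S. \<forall>y\<in>S. x \<noteq> y \<longrightarrow>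
        Phi_lower f x y \<epsilon> p = 0 \<and> (\<forall>t>0. Phi_upper f x y t p = 1)))"

end

theory Submission
  imports Defs
begin

text \<open>
  Cut the time axis into the factorial blocks \<open>(j!, (j+1)!]\<close>. A block is so long that the
  times inside it make up the fraction \<open>1 - 1/(j+1)\<close> of all times up to \<open>(j+1)!\<close>; hence
  two orbits that are \<open>\<epsilon>\<close>-apart on infinitely many whole blocks have lower density \<open>0\<close>
  of \<open>\<epsilon>\<close>-close times, and two orbits that are \<open>t\<close>-close on infinitely many whole blocks
  have upper density \<open>1\<close> of \<open>t\<close>-close times. Every \<open>s : \<nat> \<Rightarrow> bool\<close> is coded into an
  itinerary that runs through \<open>B\<close> on all even blocks and spells out each bit of \<open>s\<close> on
  infinitely many odd blocks. As \<open>A\<^sub>k \<rightarrow> a\<close> and \<open>B\<^sub>k \<rightarrow> b\<close> with \<open>a \<noteq> b\<close>, points following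
  the itineraries of different \<open>s\<close> are \<open>d(a,b)/3\<close>-apart on the blocks where the codes
  differ and arbitrarily close on late even blocks; this gives a scrambled set indexed by
  the uncountable set \<open>2\<^sup>\<nat>\<close>.
\<close>

lemma decseq_compact_eventually_subset_open:
  fixes A :: "nat \<Rightarrow> 'a::t2_space set"
  assumes compact: "\<And>i. compact (A i)" and "decseq A"
    and "open U" and "(\<Inter>i. A i) \<subseteq> U"
  shows "\<forall>\<^sub>F i in sequentially. A i \<subseteq> U"
proof (rule ccontr)
  assume "\<not> ?thesis"
  then have outside: "A i - U \<noteq> {}" for i
    using \<open>decseq A\<close> by (fastforce simp: eventually_sequentially decseq_def)
  have "A 0 \<inter> (\<Inter>i. A i - U) \<noteq> {}"
  proof (rule compact_imp_fip_image[OF compact])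
    show "closed (A i - U)" for i
      using compact_imp_closed[OF compact] \<open>open U\<close> by blast
    fix I :: "nat set"
    assume "finite I"
    then obtain n where "\<forall>i\<in>I. i \<le> n"
      using finite_nat_set_iff_bounded_le by blast
    then have "A n - U \<subseteq> A 0 \<inter> (\<Inter>i\<in>I. A i - U)"
      using \<open>decseq A\<close> by (auto simp: decseq_def)
    then show "A 0 \<inter> (\<Inter>i\<in>I. A i - U) \<noteq> {}"
      using outside[of n] by blast
  qed
  then show False
    using assms(4) by blast
qed

lemma eventually_separated_if_shrinking:
  fixes A B :: "nat \<Rightarrow> 'a::metric_space set"
  assumes "\<forall>\<^sub>F k in sequentially. A k \<subseteq> ball a r"
    and "\<forall>\<^sub>F k in sequentially. B k \<subseteq> ball b r"
  shows "\<forall>\<^sub>F k in sequentially. \<forall>u\<in>A k. \<forall>v\<in>B k. dist a b - 2 * r \<le> dist u v"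
  using assms
proof eventually_elim
  case (elim k)
  show ?case
  proof (intro ballI)
    fix u v
    assume "u \<in> A k" "v \<in> B k"
    with elim have "dist a u < r" "dist v b < r"
      by (auto simp: dist_commute)
    moreover have "dist a b \<le> dist a u + dist u v + dist v b"
      using dist_triangle[of a b u] dist_triangle[of u b v] by linarith
    ultimately show "dist a b - 2 * r \<le> dist u v"
      by linarith
  qed
qed

lemma card_filter_le_if_not_on_tail:
  fixes P :: "nat \<Rightarrow> bool"
  assumes "\<forall>k\<in>{m<..n}. \<not> P k"
  shows "card {i\<in>{1..n}. P i} \<le> m"
proof -
  have "{i\<in>{1..n}. P i} \<subseteq> {1..m}"
    using assms by force
  then have "card {i\<in>{1..n}. P i} \<le> card {1..m}"
    by (rule card_mono[rotated]) simp
  then show ?thesis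
    by simp
qed

lemma card_filter_ge_if_on_tail:
  fixes P :: "nat \<Rightarrow> bool"
  assumes "\<forall>k\<in>{m<..n}. P k"
  shows "n - m \<le> card {i\<in>{1..n}. P i}"
proof -
  have "{m<..n} \<subseteq> {i\<in>{1..n}. P i}"
    using assms by force
  then have "card {m<..n} \<le> card {i\<in>{1..n}. P i}"
    by (rule card_mono[rotated]) simp
  then show ?thesis
    by simp
qed

lemma fact_div_fact_Suc: "real (fact j) / real (fact (Suc j)) = 1 / real (Suc j)"
proof -
  have "real (fact (Suc j)) = real (Suc j) * real (fact j)"
    by (simp add: algebra_simps del: of_nat_fact)
  moreover have "real (fact j) \<noteq> 0"
    by (simp only: of_nat_eq_0_iff fact_nonzero) simp
  ultimately show ?thesis
    by simp
qed

lemma density_le_on_fact_block: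
  fixes P :: "nat \<Rightarrow> bool"
  assumes "\<forall>k\<in>{fact j<..fact (Suc j)}. \<not> P k"
  shows "real (card {i\<in>{1..fact (Suc j)}. P i}) / real (fact (Suc j)) \<le> 1 / real (Suc j)"
proof -
  have "real (card {i\<in>{1..fact (Suc j)}. P i}) \<le> real (fact j)"
    using card_filter_le_if_not_on_tail[OF assms] by (simp only: of_nat_le_iff)
  then show ?thesis
    unfolding fact_div_fact_Suc[symmetric] by (rule divide_right_mono) simp
qed

lemma density_ge_on_fact_block:
  fixes P :: "nat \<Rightarrow> bool"
  assumes "\<forall>k\<in>{fact j<..fact (Suc j)}. P k"
  shows "1 - 1 / real (Suc j) \<le> real (card {i\<in>{1..fact (Suc j)}. P i}) / real (fact (Suc j))"
proof -
  have "real (fact (Suc j) - fact j) \<le> real (card {i\<in>{1..fact (Suc j)}. P i})"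
    using card_filter_ge_if_on_tail[OF assms] by (simp only: of_nat_le_iff)
  then have "real (fact (Suc j) - fact j) / real (fact (Suc j))
      \<le> real (card {i\<in>{1..fact (Suc j)}. P i}) / real (fact (Suc j))"
    by (rule divide_right_mono) (rule of_nat_0_le_iff)
  moreover have "real (fact (Suc j) - fact j) / real (fact (Suc j)) = 1 - 1 / real (Suc j)"
    unfolding fact_div_fact_Suc[symmetric]
    by (simp add: of_nat_diff fact_mono diff_divide_distrib del: of_nat_fact fact_Suc)
  ultimately show ?thesis
    by simp
qed

lemma filterlim_fact_Suc: "filterlim (\<lambda>j. fact (Suc j) :: nat) sequentially sequentially"
  by (rule filterlim_at_top_mono[OF filterlim_Suc]) (simp add: fact_ge_self del: fact_Suc)

lemma eventually_in_fact_blocks: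
  assumes "\<forall>\<^sub>F k in sequentially. Q k"
  shows "\<forall>\<^sub>F j in sequentially. \<forall>k\<in>{fact j<..fact (Suc j)}. Q k"
proof -
  obtain N where "\<And>k. N \<le> k \<Longrightarrow> Q k"
    using assms by (auto simp: eventually_sequentially)
  moreover have "j \<le> k" if "k \<in> {fact j<..fact (Suc j)}" for j k :: nat
    using fact_ge_self[of j] that by simp
  ultimately show ?thesis
    unfolding eventually_sequentially by (meson order.trans)
qed

lemma liminf_density_eq_0:
  fixes P :: "nat \<Rightarrow> bool"
  assumes "\<exists>\<^sub>F j in sequentially. \<forall>k\<in>{fact j<..fact (Suc j)}. \<not> P k"
  shows "liminf (\<lambda>n. ereal (real (card {i\<in>{1..n}. P i}) / real n)) = 0"
    (is "liminf (\<lambda>n. ereal (?d n)) = 0")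
proof (rule antisym)
  show "0 \<le> liminf (\<lambda>n. ereal (?d n))"
    by (rule Liminf_bounded) simp
  show "liminf (\<lambda>n. ereal (?d n)) \<le> 0"
  proof (rule ccontr)
    assume "\<not> ?thesis"
    then have "0 < liminf (\<lambda>n. ereal (?d n))"
      by simp
    then obtain e :: real where e0: "0 < ereal e" and e: "ereal e < liminf (\<lambda>n. ereal (?d n))"
      using ereal_dense2 by blast
    from e0 have "0 < e"
      by simp
    have "\<forall>\<^sub>F j in sequentially. e < ?d (fact (Suc j))" (is "eventually ?large _")
      using eventually_compose_filterlim[OF less_LiminfD[OF e] filterlim_fact_Suc] by simp
    moreover have "\<forall>\<^sub>F j in sequentially. 1 / real (Suc j) < e" (is "eventually ?small _")
      using order_tendstoD(2)[OF LIMSEQ_inverse_real_of_nat \<open>0 < e\<close>] by (simp add: inverse_eq_divide)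
    ultimately have "\<exists>\<^sub>F j in sequentially.
        (\<forall>k\<in>{fact j<..fact (Suc j)}. \<not> P k) \<and> ?large j \<and> ?small j"
      by (intro frequently_eventually_frequently[OF assms] eventually_conj)
    then have "\<exists>\<^sub>F j in sequentially. False"
    proof (rule frequently_elim1)
      fix j
      assume "(\<forall>k\<in>{fact j<..fact (Suc j)}. \<not> P k) \<and> ?large j \<and> ?small j"
      with density_le_on_fact_block[of j P] show False
        by linarith
    qed
    then show False
      by simp
  qed
qed

lemma limsup_density_eq_1:
  fixes P :: "nat \<Rightarrow> bool"
  assumes "\<exists>\<^sub>F j in sequentially. \<forall>k\<in>{fact j<..fact (Suc j)}. P k"
  shows "limsup (\<lambda>n. ereal (real (card {i\<in>{1..n}. P i}) / real n)) = 1"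
    (is "limsup (\<lambda>n. ereal (?d n)) = 1")
proof (rule antisym)
  have "card {i\<in>{1..n}. P i} \<le> card {1..n}" for n
    by (rule card_mono) auto
  then have "?d n \<le> 1" for n
    by (cases "n = 0") simp_all
  then show "limsup (\<lambda>n. ereal (?d n)) \<le> 1"
    by (intro Limsup_bounded always_eventually) simp
  show "1 \<le> limsup (\<lambda>n. ereal (?d n))"
  proof (rule ccontr)
    assume "\<not> ?thesis"
    then have "limsup (\<lambda>n. ereal (?d n)) < 1"
      by simp
    then obtain e :: real where e1: "ereal e < 1" and e: "limsup (\<lambda>n. ereal (?d n)) < ereal e"
      using ereal_dense2 by blast
    from e1 have "0 < 1 - e"
      by simp
    have "\<forall>\<^sub>F j in sequentially. ?d (fact (Suc j)) < e" (is "eventually ?small _")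
      using eventually_compose_filterlim[OF Limsup_lessD[OF e] filterlim_fact_Suc] by simp
    moreover have "\<forall>\<^sub>F j in sequentially. 1 / real (Suc j) < 1 - e" (is "eventually ?gap _")
      using order_tendstoD(2)[OF LIMSEQ_inverse_real_of_nat \<open>0 < 1 - e\<close>]
      by (simp add: inverse_eq_divide)
    ultimately have "\<exists>\<^sub>F j in sequentially.
        (\<forall>k\<in>{fact j<..fact (Suc j)}. P k) \<and> ?small j \<and> ?gap j"
      by (intro frequently_eventually_frequently[OF assms] eventually_conj)
    then have "\<exists>\<^sub>F j in sequentially. False"
    proof (rule frequently_elim1)
      fix j
      assume "(\<forall>k\<in>{fact j<..fact (Suc j)}. P k) \<and> ?small j \<and> ?gap j"
      with density_ge_on_fact_block[of j P] show False
        by linarith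
    qed
    then show False
      by simp
  qed
qed

lemma Phi_lower_eq_0_if_frequently_far_on_fact_blocks:
  assumes "\<exists>\<^sub>F j in sequentially.
    \<forall>k\<in>{fact j<..fact (Suc j)}. t \<le> dist (comp_seq f (p k) x) (comp_seq f (p k) y)"
  shows "Phi_lower f x y t p = 0"
  unfolding Phi_lower_def freq_def
  by (rule liminf_density_eq_0) (use assms in \<open>simp add: not_less\<close>)

lemma Phi_upper_eq_1_if_frequently_close_on_fact_blocks:
  assumes "\<exists>\<^sub>F j in sequentially.
    \<forall>k\<in>{fact j<..fact (Suc j)}. dist (comp_seq f (p k) x) (comp_seq f (p k) y) < t"
  shows "Phi_upper f x y t p = 1"
  unfolding Phi_upper_def freq_def
  by (rule limsup_density_eq_1) (use assms in simp)

lemma Phi_lower_self: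
  assumes "0 < t"
  shows "Phi_lower f x x t p = 1"
proof -
  have "{i\<in>{1..n}. dist (comp_seq f (p i) x) (comp_seq f (p i) x) < t} = {1..n}" for n
    using assms by auto
  then have freq_eq_1: "freq f x x t p n = 1" if "0 < n" for n
    unfolding freq_def using that by simp
  have "\<forall>\<^sub>F n in sequentially. ereal (freq f x x t p n) = 1"
    using eventually_gt_at_top[of "0::nat"] by eventually_elim (simp add: freq_eq_1)
  then have "(\<lambda>n. ereal (freq f x x t p n)) \<longlonglongrightarrow> 1"
    by (rule tendsto_eventually)
  then show ?thesis
    unfolding Phi_lower_def by (rule lim_imp_Liminf[OF sequentially_bot])
qed

lemma Phi_lower_eq_0_if_itineraries_differ:
  assumes x: "\<And>k. 1 \<le> k \<Longrightarrow> comp_seq f (p k) x \<in> (if c k then A k else B k)"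
    and y: "\<And>k. 1 \<le> k \<Longrightarrow> comp_seq f (p k) y \<in> (if c' k then A k else B k)"
    and separated: "\<forall>\<^sub>F k in sequentially. \<forall>u\<in>A k. \<forall>v\<in>B k. t \<le> dist u v"
    and differ: "\<exists>\<^sub>F j in sequentially. \<forall>k\<in>{fact j<..fact (Suc j)}. c k \<noteq> c' k"
  shows "Phi_lower f x y t p = 0"
proof (rule Phi_lower_eq_0_if_frequently_far_on_fact_blocks)
  have far: "t \<le> dist (comp_seq f (p k) x) (comp_seq f (p k) y)"
    if "c k \<noteq> c' k" "1 \<le> k" "\<forall>u\<in>A k. \<forall>v\<in>B k. t \<le> dist u v" for k
    using x[OF that(2)] y[OF that(2)] that(1,3) by (cases "c k") (auto simp: dist_commute)
  have "\<forall>\<^sub>F j in sequentially. \<forall>k\<in>{fact j<..fact (Suc j)}.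
      1 \<le> k \<and> (\<forall>u\<in>A k. \<forall>v\<in>B k. t \<le> dist u v)"
    by (intro eventually_in_fact_blocks eventually_conj eventually_ge_at_top separated)
  with differ show "\<exists>\<^sub>F j in sequentially.
      \<forall>k\<in>{fact j<..fact (Suc j)}. t \<le> dist (comp_seq f (p k) x) (comp_seq f (p k) y)"
    by (rule frequently_eventually_frequently[THEN frequently_elim1]) (use far in blast)
qed

lemma Phi_upper_eq_1_if_itineraries_frequently_in_B:
  assumes x: "\<And>k. 1 \<le> k \<Longrightarrow> comp_seq f (p k) x \<in> (if c k then A k else B k)"
    and y: "\<And>k. 1 \<le> k \<Longrightarrow> comp_seq f (p k) y \<in> (if c' k then A k else B k)"
    and close: "\<forall>\<^sub>F k in sequentially. \<forall>u\<in>B k. \<forall>v\<in>B k. dist u v < t"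
    and in_B: "\<exists>\<^sub>F j in sequentially. \<forall>k\<in>{fact j<..fact (Suc j)}. \<not> c k \<and> \<not> c' k"
  shows "Phi_upper f x y t p = 1"
proof (rule Phi_upper_eq_1_if_frequently_close_on_fact_blocks)
  have near: "dist (comp_seq f (p k) x) (comp_seq f (p k) y) < t"
    if "\<not> c k \<and> \<not> c' k" "1 \<le> k" "\<forall>u\<in>B k. \<forall>v\<in>B k. dist u v < t" for k
    using x[OF that(2)] y[OF that(2)] that(1,3) by auto
  have "\<forall>\<^sub>F j in sequentially. \<forall>k\<in>{fact j<..fact (Suc j)}.
      1 \<le> k \<and> (\<forall>u\<in>B k. \<forall>v\<in>B k. dist u v < t)"
    by (intro eventually_in_fact_blocks eventually_conj eventually_ge_at_top close)
  with in_B show "\<exists>\<^sub>F j in sequentially.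
      \<forall>k\<in>{fact j<..fact (Suc j)}. dist (comp_seq f (p k) x) (comp_seq f (p k) y) < t"
    by (rule frequently_eventually_frequently[THEN frequently_elim1]) (use near in blast)
qed

definition fact_block :: "nat \<Rightarrow> nat" where
  "fact_block k = (LEAST j. k \<le> fact (Suc j))"

lemma fact_block_eq:
  assumes "k \<in> {fact j<..fact (Suc j)}"
  shows "fact_block k = j"
  unfolding fact_block_def
proof (rule Least_equality)
  show "k \<le> fact (Suc j)"
    using assms by simp
  show "j \<le> i" if "k \<le> fact (Suc i)" for i
  proof (rule ccontr)
    assume "\<not> j \<le> i"
    then have "fact (Suc i) \<le> (fact j :: nat)"
      by (intro fact_mono) simp
    with assms that show False
      by simp
  qed
qed

text \<open>Bit \<open>m\<close> of \<open>s\<close> is written on every factorial block with odd index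
  \<open>2 * prod_encode (m, R) + 1\<close>; the blocks with even index are left \<open>False\<close>.\<close>
definition block_code :: "(nat \<Rightarrow> bool) \<Rightarrow> nat \<Rightarrow> bool" where
  "block_code s k = (odd (fact_block k) \<and> s (fst (prod_decode (fact_block k div 2))))"

lemma frequently_block_code_eq:
  "\<exists>\<^sub>F j in sequentially. \<forall>s. \<forall>k\<in>{fact j<..fact (Suc j)}. block_code s k = s m"
  unfolding frequently_sequentially
proof
  fix N
  let ?j = "Suc (2 * prod_encode (m, N))"
  have "N \<le> ?j"
    using le_prod_encode_2[of N m] by simp
  moreover have "\<forall>s. \<forall>k\<in>{fact ?j<..fact (Suc ?j)}. block_code s k = s m"
    by (simp add: block_code_def fact_block_eq del: fact_Suc)
  ultimately show "\<exists>j\<ge>N. \<forall>s. \<forall>k\<in>{fact j<..fact (Suc j)}. block_code s k = s m"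
    by blast
qed

lemma frequently_block_code_False:
  "\<exists>\<^sub>F j in sequentially. \<forall>s. \<forall>k\<in>{fact j<..fact (Suc j)}. \<not> block_code s k"
  unfolding frequently_sequentially
proof
  fix N
  have "\<forall>s. \<forall>k\<in>{fact (2 * N)<..fact (Suc (2 * N))}. \<not> block_code s k"
    by (simp add: block_code_def fact_block_eq del: fact_Suc)
  then show "\<exists>j\<ge>N. \<forall>s. \<forall>k\<in>{fact j<..fact (Suc j)}. \<not> block_code s k"
    by (intro exI[of _ "2 * N"]) simp
qed

lemma chaotic_pair_of_block_codes:
  assumes itinerary: "\<And>c k. 1 \<le> k \<Longrightarrow> comp_seq f (p k) (x c) \<in> (if c k then A k else B k)"
    and separated: "\<forall>\<^sub>F k in sequentially. \<forall>u\<in>A k. \<forall>v\<in>B k. \<epsilon> \<le> dist u v"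
    and close: "\<And>t. 0 < t \<Longrightarrow> \<forall>\<^sub>F k in sequentially. \<forall>u\<in>B k. \<forall>v\<in>B k. dist u v < t"
    and "s \<noteq> s'"
  shows "Phi_lower f (x (block_code s)) (x (block_code s')) \<epsilon> p = 0
    \<and> (\<forall>t>0. Phi_upper f (x (block_code s)) (x (block_code s')) t p = 1)"
proof -
  from \<open>s \<noteq> s'\<close> obtain m where "s m \<noteq> s' m"
    by blast
  have differ: "\<exists>\<^sub>F j in sequentially.
      \<forall>k\<in>{fact j<..fact (Suc j)}. block_code s k \<noteq> block_code s' k"
    using frequently_block_code_eq[of m] by (rule frequently_elim1) (use \<open>s m \<noteq> s' m\<close> in auto)
  have in_B: "\<exists>\<^sub>F j in sequentially.
      \<forall>k\<in>{fact j<..fact (Suc j)}. \<not> block_code s k \<and> \<not> block_code s' k"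
    using frequently_block_code_False by (rule frequently_elim1) blast
  show ?thesis
    using Phi_lower_eq_0_if_itineraries_differ[OF itinerary itinerary separated differ]
      Phi_upper_eq_1_if_itineraries_frequently_in_B[OF itinerary itinerary close in_B]
    by blast
qed

lemma uncountable_UNIV_nat_bool: "uncountable (UNIV :: (nat \<Rightarrow> bool) set)"
proof
  assume "countable (UNIV :: (nat \<Rightarrow> bool) set)"
  then have "range (from_nat_into (UNIV :: (nat \<Rightarrow> bool) set)) = UNIV"
    by simp
  then obtain m where "from_nat_into UNIV m = (\<lambda>n. \<not> from_nat_into (UNIV :: (nat \<Rightarrow> bool) set) n n)"
    by (metis UNIV_I imageE)
  then show False
    by metis
qed

lemma unif_distr_chaotic_if_chaotic_family:
  fixes z :: "(nat \<Rightarrow> bool) \<Rightarrow> 'a::metric_space"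
  assumes "range z \<subseteq> X" and "0 < \<epsilon>"
    and chaotic: "\<And>s s'. s \<noteq> s' \<Longrightarrow>
      Phi_lower f (z s) (z s') \<epsilon> p = 0 \<and> (\<forall>t>0. Phi_upper f (z s) (z s') t p = 1)"
  shows "unif_distr_chaotic X f p"
proof -
  have "inj z"
  proof (rule injI, rule ccontr)
    fix s s'
    assume "z s = z s'" "s \<noteq> s'"
    then show False
      using chaotic[OF \<open>s \<noteq> s'\<close>] by (simp add: Phi_lower_self[OF \<open>0 < \<epsilon>\<close>])
  qed
  then have "uncountable (range z)"
    using uncountable_UNIV_nat_bool countable_image_inj_on by blast
  moreover have "\<forall>x\<in>range z. \<forall>y\<in>range z. x \<noteq> y \<longrightarrow>
      Phi_lower f x y \<epsilon> p = 0 \<and> (\<forall>t>0. Phi_upper f x y t p = 1)"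
  proof (intro ballI impI)
    fix x y
    assume "x \<in> range z" "y \<in> range z" "x \<noteq> y"
    then obtain s s' where "x = z s" "y = z s'" "s \<noteq> s'"
      by blast
    then show "Phi_lower f x y \<epsilon> p = 0 \<and> (\<forall>t>0. Phi_upper f x y t p = 1)"
      using chaotic by blast
  qed
  ultimately show ?thesis
    unfolding unif_distr_chaotic_def using assms(1,2) by blast
qed

theorem mainTheorem5:
  fixes X :: "'a::metric_space set" and f :: "nat \<Rightarrow> 'a \<Rightarrow> 'a" and p :: "nat \<Rightarrow> nat"
    and A B :: "nat \<Rightarrow> 'a set" and a b :: 'a
  assumes "compact X"
    and "\<And>n. n \<ge> 1 \<Longrightarrow> continuous_on X (f n) \<and> f n ` X \<subseteq> X"
    and "\<And>k. k \<ge> 1 \<Longrightarrow> p k > 0"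
    and "\<And>i. compact (A i) \<and> A i \<subseteq> X" and "\<And>i. A (Suc i) \<subseteq> A i"
    and "\<And>i. compact (B i) \<and> B i \<subseteq> X" and "\<And>i. B (Suc i) \<subseteq> B i"
    and "(\<Inter>i. A i) = {a}" and "(\<Inter>i. B i) = {b}" and "a \<noteq> b"
    and "\<And>c :: nat \<Rightarrow> bool. \<exists>x\<in>X. \<forall>k\<ge>1. comp_seq f (p k) x \<in> (if c k then A k else B k)"
  shows "unif_distr_chaotic X f p"
proof -
  obtain x where x_in: "\<And>c. x c \<in> X"
    and itinerary: "\<And>c k. 1 \<le> k \<Longrightarrow> comp_seq f (p k) (x c) \<in> (if c k then A k else B k)"
    using assms(11) by metis
  define \<epsilon> where "\<epsilon> = dist a b / 3"
  have "0 < \<epsilon>"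
    using assms(10) by (simp add: \<epsilon>_def)
  have shrink_A: "\<forall>\<^sub>F k in sequentially. A k \<subseteq> ball a r" if "0 < r" for r
    using assms(4,5,8) that by (intro decseq_compact_eventually_subset_open) (auto simp: decseq_Suc_iff)
  have shrink_B: "\<forall>\<^sub>F k in sequentially. B k \<subseteq> ball b r" if "0 < r" for r
    using assms(6,7,9) that by (intro decseq_compact_eventually_subset_open) (auto simp: decseq_Suc_iff)
  have separated: "\<forall>\<^sub>F k in sequentially. \<forall>u\<in>A k. \<forall>v\<in>B k. \<epsilon> \<le> dist u v"
    using eventually_separated_if_shrinking[OF shrink_A shrink_B, OF \<open>0 < \<epsilon>\<close> \<open>0 < \<epsilon>\<close>]
    by (simp add: \<epsilon>_def)
  have close: "\<forall>\<^sub>F k in sequentially. \<forall>u\<in>B k. \<forall>v\<in>B k. dist u v < t" if "0 < t" for t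
    using shrink_B[OF half_gt_zero[OF that]]
    by eventually_elim (meson dist_triangle_half_r mem_ball subsetD)
  show ?thesis
  proof (rule unif_distr_chaotic_if_chaotic_family)
    show "range (\<lambda>s. x (block_code s)) \<subseteq> X"
      using x_in by blast
    show "\<And>s s'. s \<noteq> s' \<Longrightarrow> Phi_lower f (x (block_code s)) (x (block_code s')) \<epsilon> p = 0
        \<and> (\<forall>t>0. Phi_upper f (x (block_code s)) (x (block_code s')) t p = 1)"
      by (rule chaotic_pair_of_block_codes[OF itinerary separated close])
  qed fact
qed

end
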